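(* For every odd prime $p$, $$\sum_{\substack{k_1,k_2,k_3,k_4 = 0\\ k_1+k_2+k_3+k_4 = p-1}}^{\frac{p-1}{2}} \left[\prod_{i=1}^4 (k_i+1)_{\frac{p-1}{2}}^2\right]\left(H_{\frac{p-1}{2}+k_4} - H_{k_4}\right) \equiv 0 \pmod{p}.$$
   Context: $(a)_n = a(a+1)\cdots(a+n-1)$ is the rising factorial with $(a)_0 = 1$; $H_n = \sum_{j=1}^n \frac1j$ with $H_0 = 0$. The sum runs over integers $0 \le k_i \le \frac{p-1}{2}$ with $\sum k_i = p-1$; the terms are $p$-integral rationals and the congruence is in $\mathbb{Z}_{(p)}$. *)

theory Defs
  imports Complex_Main "HOL-Computational_Algebra.Primes"
begin

definition H :: "nat \<Rightarrow> rat" where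
  "H n = (\<Sum>j=1..n. 1 / of_nat j)"

definition cong_zero_Zp :: "nat \<Rightarrow> rat \<Rightarrow> bool" where
  "cong_zero_Zp p x \<longleftrightarrow> (\<exists>a b :: int. \<not> int p dvd b \<and> x = of_int (int p * a) / of_int b)"

end

theory Submission
  imports Defs "HOL-Number_Theory.Cong"
begin

text \<open>
  Let \<open>n = (p - 1) div 2\<close>. The reflection \<open>k\<^sub>i \<mapsto> n - k\<^sub>i\<close> maps the index set onto itself,
  so it suffices that each summand plus its reflected summand is divisible by \<open>p\<close>; then
  twice the sum is, and \<open>2\<close> is a unit since \<open>p\<close> is odd.
  The squared Pochhammer factors are reflection invariant mod \<open>p\<close>, because \<open>(n - k + 1)\<^sub>n\<close>
  is the product of the \<open>p - j\<close> for \<open>k < j \<le> k + n\<close>, i.e. \<open>(-1)\<^sup>n (k + 1)\<^sub>n\<close> mod \<open>p\<close>.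
  The harmonic factors are \<open>p\<close>-integral, and a factor and its reflection add up to the sum
  over \<open>k < j \<le> k + n\<close> of \<open>1/j + 1/(p - j) = p / (j (p - j))\<close>, which is \<open>0\<close> mod \<open>p\<close>.
\<close>

definition p_integral :: "nat \<Rightarrow> rat \<Rightarrow> bool" where
  "p_integral p x \<longleftrightarrow> (\<exists>a b :: int. \<not> int p dvd b \<and> x = of_int a / of_int b)"

lemma cong_zero_Zp_iff_p_integral_multiple:
  "cong_zero_Zp p x \<longleftrightarrow> (\<exists>y. p_integral p y \<and> x = of_nat p * y)"
proof
  assume "cong_zero_Zp p x"
  then obtain a b :: int where "\<not> int p dvd b" "x = of_int (int p * a) / of_int b"
    unfolding cong_zero_Zp_def by blast
  then show "\<exists>y. p_integral p y \<and> x = of_nat p * y"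
    unfolding p_integral_def by (intro exI[of _ "of_int a / of_int b"]) auto
next
  assume "\<exists>y. p_integral p y \<and> x = of_nat p * y"
  then obtain a b :: int where "\<not> int p dvd b" "x = of_nat p * (of_int a / of_int b)"
    unfolding p_integral_def by blast
  then show "cong_zero_Zp p x"
    unfolding cong_zero_Zp_def by (intro exI[of _ a] exI[of _ b]) auto
qed

context
  fixes p :: nat
  assumes prime: "prime p"
begin

lemma not_dvd_mult_int: "\<not> int p dvd b \<Longrightarrow> \<not> int p dvd d \<Longrightarrow> \<not> int p dvd (b * d)"
  using prime by (simp add: prime_dvd_mult_iff prime_nat_int_transfer)

lemma p_integral_of_int: "p_integral p (of_int a)"
  unfolding p_integral_def using prime
  by (intro exI[of _ a] exI[of _ 1]) (auto simp: prime_nat_int_transfer)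

lemma p_integral_inverse_of_int: "\<not> int p dvd b \<Longrightarrow> p_integral p (1 / of_int b)"
  unfolding p_integral_def by (metis of_int_1)

lemma p_integral_add:
  assumes "p_integral p x" "p_integral p y"
  shows "p_integral p (x + y)"
proof -
  obtain a b c d :: int where
    h: "\<not> int p dvd b" "x = of_int a / of_int b" "\<not> int p dvd d" "y = of_int c / of_int d"
    using assms unfolding p_integral_def by blast
  then have "b \<noteq> 0" "d \<noteq> 0" by auto
  with h have "x + y = of_int (a * d + c * b) / of_int (b * d)"
    by (simp add: field_simps)
  then show ?thesis
    unfolding p_integral_def using not_dvd_mult_int[OF h(1,3)] by blast
qed

lemma p_integral_mult:
  assumes "p_integral p x" "p_integral p y"
  shows "p_integral p (x * y)"
proof -
  obtain a b c d :: int where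
    h: "\<not> int p dvd b" "x = of_int a / of_int b" "\<not> int p dvd d" "y = of_int c / of_int d"
    using assms unfolding p_integral_def by blast
  then have "x * y = of_int (a * c) / of_int (b * d)" by simp
  then show ?thesis
    unfolding p_integral_def using not_dvd_mult_int[OF h(1,3)] by blast
qed

lemma p_integral_sum: "(\<And>i. i \<in> A \<Longrightarrow> p_integral p (f i)) \<Longrightarrow> p_integral p (sum f A)"
  by (induction A rule: infinite_finite_induct)
    (auto intro: p_integral_add p_integral_of_int[where a = 0, simplified])

lemma cong_zero_Zp_of_nat_mult: "p_integral p y \<Longrightarrow> cong_zero_Zp p (of_nat p * y)"
  unfolding cong_zero_Zp_iff_p_integral_multiple by blast

lemma cong_zero_Zp_add:
  "cong_zero_Zp p x \<Longrightarrow> cong_zero_Zp p y \<Longrightarrow> cong_zero_Zp p (x + y)"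
  unfolding cong_zero_Zp_iff_p_integral_multiple by (metis distrib_left p_integral_add)

lemma cong_zero_Zp_mult: "cong_zero_Zp p x \<Longrightarrow> p_integral p y \<Longrightarrow> cong_zero_Zp p (x * y)"
  unfolding cong_zero_Zp_iff_p_integral_multiple by (metis mult.assoc p_integral_mult)

lemma cong_zero_Zp_sum:
  "(\<And>i. i \<in> A \<Longrightarrow> cong_zero_Zp p (f i)) \<Longrightarrow> cong_zero_Zp p (sum f A)"
proof (induction A rule: infinite_finite_induct)
  case (infinite A)
  then show ?case using cong_zero_Zp_of_nat_mult[OF p_integral_of_int[of 0]] by simp
next
  case empty
  then show ?case using cong_zero_Zp_of_nat_mult[OF p_integral_of_int[of 0]] by simp
next
  case (insert x F)
  then show ?case by (simp add: cong_zero_Zp_add)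
qed

lemma cong_zero_Zp_cancel_unit:
  assumes "\<not> int p dvd c" "cong_zero_Zp p (of_int c * x)"
  shows "cong_zero_Zp p x"
proof -
  obtain a b :: int where h: "\<not> int p dvd b" "of_int c * x = of_int (int p * a) / of_int b"
    using assms(2) unfolding cong_zero_Zp_def by blast
  have "b \<noteq> 0" "c \<noteq> 0" using assms(1) h(1) by auto
  with h(2) have "x = of_int (int p * a) / of_int (c * b)"
    by (simp add: field_simps)
  then show ?thesis
    unfolding cong_zero_Zp_def using not_dvd_mult_int[OF assms(1) h(1)] by blast
qed

lemma cong_zero_Zp_mult_add_mult:
  assumes "cong_zero_Zp p (h1 + h2)" "p_integral p h2" "[a2 = a1] (mod int p)"
  shows "cong_zero_Zp p (of_int a1 * h1 + of_int a2 * h2)"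
proof -
  obtain m where m: "a2 = a1 + int p * m"
    using assms(3) by (metis cong_iff_lin cong_sym)
  have "of_int a1 * h1 + of_int a2 * h2 = (h1 + h2) * of_int a1 + of_nat p * (of_int m * h2)"
    by (simp add: m algebra_simps)
  moreover have "cong_zero_Zp p ((h1 + h2) * of_int a1)"
    using assms(1) by (rule cong_zero_Zp_mult[OF _ p_integral_of_int])
  moreover have "cong_zero_Zp p (of_nat p * (of_int m * h2))"
    using assms(2) by (intro cong_zero_Zp_of_nat_mult p_integral_mult p_integral_of_int)
  ultimately show ?thesis by (simp add: cong_zero_Zp_add)
qed

lemma cong_zero_Zp_sum_involution:
  assumes "odd p"
    and involution: "\<And>x. x \<in> I \<Longrightarrow> s x \<in> I \<and> s (s x) = x"
    and pair: "\<And>x. x \<in> I \<Longrightarrow> cong_zero_Zp p (f x + f (s x))"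
  shows "cong_zero_Zp p (sum f I)"
proof -
  have "sum f I = sum (f \<circ> s) I"
    by (rule sum.reindex_bij_witness[where i = s and j = s]) (auto dest: involution)
  then have "of_int 2 * sum f I = (\<Sum>x\<in>I. f x + f (s x))"
    by (simp add: sum.distrib)
  moreover have "cong_zero_Zp p (\<Sum>x\<in>I. f x + f (s x))"
    by (rule cong_zero_Zp_sum) (rule pair)
  moreover have "\<not> int p dvd 2"
  proof
    assume "int p dvd 2"
    then have "p dvd 2" by presburger
    with prime two_is_prime_nat have "p = 2" by (rule primes_dvd_imp_eq)
    with \<open>odd p\<close> show False by simp
  qed
  ultimately show ?thesis
    using cong_zero_Zp_cancel_unit[of 2 "sum f I"] by simp
qed

end

lemma pochhammer_cong:
  fixes a b m :: int
  shows "[a = b] (mod m) \<Longrightarrow> [pochhammer a n = pochhammer b n] (mod m)"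
  unfolding pochhammer_prod by (intro cong_prod cong_add cong_refl)

lemma pochhammer_reflection_sq_cong:
  assumes "p = 2 * n + 1" "k \<le> n"
  shows "[pochhammer (int (n - k + 1)) n ^ 2 = pochhammer (int (k + 1)) n ^ 2] (mod int p)"
proof -
  have "int (n - k + 1) = - int (k + n) + int p * 1"
    using assms by simp
  then have "[int (n - k + 1) = - int (k + n)] (mod int p)"
    by (metis cong_iff_lin cong_sym)
  then have "[pochhammer (int (n - k + 1)) n = pochhammer (- int (k + n)) n] (mod int p)"
    by (rule pochhammer_cong)
  also have "pochhammer (- int (k + n)) n = (- 1) ^ n * pochhammer (int (k + 1)) n"
    using pochhammer_minus[of "int (k + n)" n]
    by (simp only: of_nat_add of_nat_1 add_diff_cancel_right')
  finally have "[pochhammer (int (n - k + 1)) n ^ 2 =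
      ((- 1) ^ n * pochhammer (int (k + 1)) n) ^ 2] (mod int p)"
    by (rule cong_pow)
  also have "((- 1) ^ n * pochhammer (int (k + 1)) n) ^ 2 = pochhammer (int (k + 1)) n ^ 2"
    by (simp add: power_mult_distrib flip: power_mult)
  finally show ?thesis .
qed

lemma H_add_diff: "H (n + k) - H k = (\<Sum>j\<in>{k<..n + k}. 1 / of_nat j)"
proof (induction n)
  case (Suc n)
  have "{k<..Suc n + k} = insert (Suc (n + k)) {k<..n + k}"
    by auto
  moreover have "H (Suc n + k) = H (n + k) + 1 / of_nat (Suc (n + k))"
    by (simp add: H_def)
  ultimately show ?case
    using Suc by simp
qed simp

lemma p_integral_sum_inverse:
  assumes "prime p" "\<And>j. j \<in> A \<Longrightarrow> 0 < j \<and> j < p"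
  shows "p_integral p (\<Sum>j\<in>A. 1 / of_nat j)"
proof (rule p_integral_sum[OF assms(1)])
  fix j assume "j \<in> A"
  then have "\<not> int p dvd int j"
    using assms(2) by (auto dest: nat_dvd_not_less)
  then show "p_integral p (1 / of_nat j)"
    using p_integral_inverse_of_int[OF assms(1)] by (metis of_int_of_nat_eq)
qed

lemma cong_zero_Zp_inverse_add_inverse_complement:
  assumes "prime p" "0 < j" "j < p"
  shows "cong_zero_Zp p (1 / of_nat j + 1 / of_nat (p - j))"
proof -
  have "1 / of_nat j + 1 / of_nat (p - j) = (of_nat p :: rat) * (1 / of_int (int j * int (p - j)))"
    using assms by (simp add: field_simps of_nat_diff)
  moreover have "\<not> p dvd j" "\<not> p dvd (p - j)"
    using assms(2,3) nat_dvd_not_less[of j p] nat_dvd_not_less[of "p - j" p] by auto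
  then have "\<not> int p dvd int j" "\<not> int p dvd int (p - j)"
    unfolding int_dvd_int_iff .
  ultimately show ?thesis
    by (metis assms(1) cong_zero_Zp_of_nat_mult not_dvd_mult_int p_integral_inverse_of_int)
qed

lemma H_reflection_cong_zero:
  assumes "prime p" "p = 2 * n + 1" "k \<le> n"
  shows "cong_zero_Zp p ((H (n + k) - H k) + (H (n + (n - k)) - H (n - k)))"
proof -
  have "(\<Sum>j\<in>{n - k<..n + (n - k)}. 1 / of_nat j) = (\<Sum>j\<in>{k<..n + k}. 1 / of_nat (p - j) :: rat)"
    by (rule sum.reindex_bij_witness[where i = "\<lambda>j. p - j" and j = "\<lambda>j. p - j"]) (use assms in auto)
  then have "(H (n + k) - H k) + (H (n + (n - k)) - H (n - k)) =
      (\<Sum>j\<in>{k<..n + k}. 1 / of_nat j + 1 / of_nat (p - j))"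
    by (simp add: H_add_diff sum.distrib)
  also have "cong_zero_Zp p \<dots>"
    using assms by (intro cong_zero_Zp_sum cong_zero_Zp_inverse_add_inverse_complement) auto
  finally show ?thesis .
qed

lemma summand_reflection_cong_zero:
  fixes a b c d n :: nat
  assumes "prime p" "p = 2 * n + 1" "a \<le> n" "b \<le> n" "c \<le> n" "d \<le> n"
  defines "t \<equiv> \<lambda>a b c d.
    (pochhammer (of_nat (a + 1)) n ^ 2 * pochhammer (of_nat (b + 1)) n ^ 2 *
     pochhammer (of_nat (c + 1)) n ^ 2 * pochhammer (of_nat (d + 1)) n ^ 2 :: rat) *
    (H (n + d) - H d)"
  shows "cong_zero_Zp p (t a b c d + t (n - a) (n - b) (n - c) (n - d))"
proof -
  define P where "P k = pochhammer (int (k + 1)) n ^ 2" for k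
  have t: "t a b c d = of_int (P a * P b * P c * P d) * (H (n + d) - H d)" for a b c d
    unfolding t_def P_def by (simp flip: pochhammer_of_int)
  have "[P (n - a) * P (n - b) * P (n - c) * P (n - d) = P a * P b * P c * P d] (mod int p)"
    unfolding P_def using assms
    by (intro cong_mult pochhammer_reflection_sq_cong) (auto simp: Suc_diff_le)
  moreover have "p_integral p (H (n + (n - d)) - H (n - d))"
    unfolding H_add_diff using assms by (intro p_integral_sum_inverse) auto
  ultimately show ?thesis
    unfolding t by (intro cong_zero_Zp_mult_add_mult H_reflection_cong_zero assms)
qed

theorem lemma2p10:
  fixes p :: nat
  assumes "prime p" and "odd p"
  shows "cong_zero_Zp p
    (\<Sum>(k1, k2, k3, k4) \<in> {(k1, k2, k3, k4). k1 \<le> (p - 1) div 2 \<and> k2 \<le> (p - 1) div 2 \<and>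
                                k3 \<le> (p - 1) div 2 \<and> k4 \<le> (p - 1) div 2 \<and>
                                k1 + k2 + k3 + k4 = p - 1}.
       (pochhammer (of_nat (k1 + 1)) ((p - 1) div 2) ^ 2 *
        pochhammer (of_nat (k2 + 1)) ((p - 1) div 2) ^ 2 *
        pochhammer (of_nat (k3 + 1)) ((p - 1) div 2) ^ 2 *
        pochhammer (of_nat (k4 + 1)) ((p - 1) div 2) ^ 2 :: rat) *
       (H ((p - 1) div 2 + k4) - H k4))"
proof -
  define n where "n = (p - 1) div 2"
  have p: "p = 2 * n + 1"
    using assms(2) unfolding n_def by presburger
  define s where "s = (\<lambda>(a, b, c, d). (n - a, n - b, n - c, n - d))"
  show ?thesis
    unfolding n_def[symmetric]
  proof (rule cong_zero_Zp_sum_involution[OF assms, where s = s], goal_cases)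
    case (1 x)
    then show ?case using p by (auto simp: s_def)
  next
    case (2 x)
    then show ?case
      using summand_reflection_cong_zero[OF assms(1) p] by (auto simp: s_def)
  qed
qed

end
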